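(* Let $(\mathcal{S},\widehat{\mathcal{S}},\sigma,\tau,\iota)$ be a duplicated category of sets. Then the functors $\sigma:\mathcal{S}\to\widehat{\mathcal{S}}$ and $\tau:\mathcal{S}\to\widehat{\mathcal{S}}$ are faithful.
   Context: A duplicated category of sets is a quintet $(\mathcal{S},\widehat{\mathcal{S}},\sigma,\tau,\iota)$ such that: (i) $\mathcal{S}$ and $\widehat{\mathcal{S}}$ are categories satisfying Lawvere's axioms of the Elementary Theory of the Category of Sets (ETCS), i.e. each is a well-pointed topos with a natural numbers object satisfying the axiom of choice; (ii) $\sigma:\mathcal{S}\to\widehat{\mathcal{S}}$ is a functor preserving all finite limits, the subobject classifier $2$, exponentials and natural numbers objects; (iii) $\tau:\mathcal{S}\to\widehat{\mathcal{S}}$ is a functor preserving all finite limits; (iv) $\iota:\sigma\to\tau$ is a natural transformation such that $\iota_X=\mathrm{id}_{\sigma(X)}=\mathrm{id}_{\tau(X)}$ for every finite object $X$ of $\mathcal{S}$. *)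

theory Defs
  imports Main
begin

text \<open>Elementary (carrier-based) category theory, sufficient to state ETCS and
  duplicated categories of sets. Composition convention: cmp C g f = g after f.\<close>

record ('o, 'a) cat =
  obj :: "'o set"
  arr :: "'a set"
  cdom :: "'a \<Rightarrow> 'o"
  ccod :: "'a \<Rightarrow> 'o"
  cmp :: "'a \<Rightarrow> 'a \<Rightarrow> 'a"
  cid :: "'o \<Rightarrow> 'a"

definition hom :: "('o, 'a) cat \<Rightarrow> 'o \<Rightarrow> 'o \<Rightarrow> 'a set" where
  "hom C X Y = {f \<in> arr C. cdom C f = X \<and> ccod C f = Y}"

definition category :: "('o, 'a) cat \<Rightarrow> bool" where
  "category C \<longleftrightarrow>
     (\<forall>f \<in> arr C. cdom C f \<in> obj C \<and> ccod C f \<in> obj C) \<and>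
     (\<forall>X \<in> obj C. cid C X \<in> hom C X X) \<and>
     (\<forall>f \<in> arr C. \<forall>g \<in> arr C. ccod C f = cdom C g \<longrightarrow>
         cmp C g f \<in> hom C (cdom C f) (ccod C g)) \<and>
     (\<forall>f \<in> arr C. cmp C (cid C (ccod C f)) f = f \<and> cmp C f (cid C (cdom C f)) = f) \<and>
     (\<forall>f \<in> arr C. \<forall>g \<in> arr C. \<forall>h \<in> arr C.
         ccod C f = cdom C g \<and> ccod C g = cdom C h \<longrightarrow>
         cmp C h (cmp C g f) = cmp C (cmp C h g) f)"

definition mono :: "('o, 'a) cat \<Rightarrow> 'a \<Rightarrow> bool" where
  "mono C m \<longleftrightarrow> m \<in> arr C \<and>
     (\<forall>f \<in> arr C. \<forall>g \<in> arr C. ccod C f = cdom C m \<and> ccod C g = cdom C m \<and>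
        cdom C f = cdom C g \<and> cmp C m f = cmp C m g \<longrightarrow> f = g)"

definition epi :: "('o, 'a) cat \<Rightarrow> 'a \<Rightarrow> bool" where
  "epi C e \<longleftrightarrow> e \<in> arr C \<and>
     (\<forall>f \<in> arr C. \<forall>g \<in> arr C. cdom C f = ccod C e \<and> cdom C g = ccod C e \<and>
        ccod C f = ccod C g \<and> cmp C f e = cmp C g e \<longrightarrow> f = g)"

definition iso :: "('o, 'a) cat \<Rightarrow> 'a \<Rightarrow> bool" where
  "iso C f \<longleftrightarrow> f \<in> arr C \<and>
     (\<exists>g \<in> hom C (ccod C f) (cdom C f).
        cmp C g f = cid C (cdom C f) \<and> cmp C f g = cid C (ccod C f))"

definition is_terminal :: "('o, 'a) cat \<Rightarrow> 'o \<Rightarrow> bool" where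
  "is_terminal C T \<longleftrightarrow> T \<in> obj C \<and> (\<forall>X \<in> obj C. \<exists>!f. f \<in> hom C X T)"

definition is_pullback :: "('o, 'a) cat \<Rightarrow> 'a \<Rightarrow> 'a \<Rightarrow> 'o \<Rightarrow> 'a \<Rightarrow> 'a \<Rightarrow> bool" where
  "is_pullback C f g P p q \<longleftrightarrow>
     f \<in> arr C \<and> g \<in> arr C \<and> ccod C f = ccod C g \<and>
     p \<in> hom C P (cdom C f) \<and> q \<in> hom C P (cdom C g) \<and>
     cmp C f p = cmp C g q \<and>
     (\<forall>Z p' q'. p' \<in> hom C Z (cdom C f) \<and> q' \<in> hom C Z (cdom C g) \<and>
        cmp C f p' = cmp C g q' \<longrightarrow>
        (\<exists>!h. h \<in> hom C Z P \<and> cmp C p h = p' \<and> cmp C q h = q'))"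

definition is_product :: "('o, 'a) cat \<Rightarrow> 'o \<Rightarrow> 'o \<Rightarrow> 'o \<Rightarrow> 'a \<Rightarrow> 'a \<Rightarrow> bool" where
  "is_product C A B P p q \<longleftrightarrow>
     A \<in> obj C \<and> B \<in> obj C \<and> p \<in> hom C P A \<and> q \<in> hom C P B \<and>
     (\<forall>Z p' q'. p' \<in> hom C Z A \<and> q' \<in> hom C Z B \<longrightarrow>
        (\<exists>!h. h \<in> hom C Z P \<and> cmp C p h = p' \<and> cmp C q h = q'))"

definition has_finite_limits :: "('o, 'a) cat \<Rightarrow> bool" where
  "has_finite_limits C \<longleftrightarrow> (\<exists>T. is_terminal C T) \<and>
     (\<forall>f \<in> arr C. \<forall>g \<in> arr C. ccod C f = ccod C g \<longrightarrow> (\<exists>P p q. is_pullback C f g P p q))"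

definition is_exponential ::
  "('o, 'a) cat \<Rightarrow> 'o \<Rightarrow> 'o \<Rightarrow> 'o \<Rightarrow> 'o \<Rightarrow> 'a \<Rightarrow> 'a \<Rightarrow> 'a \<Rightarrow> bool" where
  "is_exponential C A B E P p1 p2 ev \<longleftrightarrow>
     B \<in> obj C \<and> is_product C E A P p1 p2 \<and> ev \<in> hom C P B \<and>
     (\<forall>Z Q q1 q2 g. is_product C Z A Q q1 q2 \<and> g \<in> hom C Q B \<longrightarrow>
        (\<exists>!h. h \<in> hom C Z E \<and>
           (\<exists>k. k \<in> hom C Q P \<and> cmp C p1 k = cmp C h q1 \<and> cmp C p2 k = q2 \<and>
                cmp C ev k = g)))"

definition cartesian_closed :: "('o, 'a) cat \<Rightarrow> bool" where
  "cartesian_closed C \<longleftrightarrow>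
     (\<forall>A \<in> obj C. \<forall>B \<in> obj C. \<exists>E P p1 p2 ev. is_exponential C A B E P p1 p2 ev)"

definition is_subobject_classifier :: "('o, 'a) cat \<Rightarrow> 'o \<Rightarrow> 'o \<Rightarrow> 'a \<Rightarrow> bool" where
  "is_subobject_classifier C T Om t \<longleftrightarrow>
     is_terminal C T \<and> t \<in> hom C T Om \<and>
     (\<forall>m. mono C m \<longrightarrow>
        (\<exists>!\<chi>. \<chi> \<in> hom C (ccod C m) Om \<and> (\<exists>u. is_pullback C \<chi> t (cdom C m) m u)))"

definition topos :: "('o, 'a) cat \<Rightarrow> bool" where
  "topos C \<longleftrightarrow> category C \<and> has_finite_limits C \<and> cartesian_closed C \<and>
     (\<exists>T Om t. is_subobject_classifier C T Om t)"

definition is_nno :: "('o, 'a) cat \<Rightarrow> 'o \<Rightarrow> 'o \<Rightarrow> 'a \<Rightarrow> 'a \<Rightarrow> bool" where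
  "is_nno C T N z s \<longleftrightarrow>
     is_terminal C T \<and> z \<in> hom C T N \<and> s \<in> hom C N N \<and>
     (\<forall>X x u. x \<in> hom C T X \<and> u \<in> hom C X X \<longrightarrow>
        (\<exists>!h. h \<in> hom C N X \<and> cmp C h z = x \<and> cmp C h s = cmp C u h))"

definition well_pointed :: "('o, 'a) cat \<Rightarrow> bool" where
  "well_pointed C \<longleftrightarrow>
     (\<forall>T. is_terminal C T \<longrightarrow>
        (\<forall>X Y. \<forall>f \<in> hom C X Y. \<forall>g \<in> hom C X Y.
           (\<forall>x \<in> hom C T X. cmp C f x = cmp C g x) \<longrightarrow> f = g)) \<and>
     (\<exists>X Y. \<exists>f \<in> hom C X Y. \<exists>g \<in> hom C X Y. f \<noteq> g)"

definition axiom_of_choice :: "('o, 'a) cat \<Rightarrow> bool" where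
  "axiom_of_choice C \<longleftrightarrow>
     (\<forall>e. epi C e \<longrightarrow> (\<exists>s \<in> hom C (ccod C e) (cdom C e). cmp C e s = cid C (ccod C e)))"

definition ETCS :: "('o, 'a) cat \<Rightarrow> bool" where
  "ETCS C \<longleftrightarrow> topos C \<and> well_pointed C \<and> (\<exists>T N z s. is_nno C T N z s) \<and>
     axiom_of_choice C"

text \<open>Finite object (Dedekind finiteness: every monic endomorphism is an iso).\<close>
definition finite_obj :: "('o, 'a) cat \<Rightarrow> 'o \<Rightarrow> bool" where
  "finite_obj C X \<longleftrightarrow> X \<in> obj C \<and> (\<forall>m \<in> hom C X X. mono C m \<longrightarrow> iso C m)"

definition "functor" ::
  "('o, 'a) cat \<Rightarrow> ('p, 'b) cat \<Rightarrow> ('o \<Rightarrow> 'p) \<Rightarrow> ('a \<Rightarrow> 'b) \<Rightarrow> bool" where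
  "functor C D Fo Fa \<longleftrightarrow>
     (\<forall>X \<in> obj C. Fo X \<in> obj D) \<and>
     (\<forall>f \<in> arr C. Fa f \<in> hom D (Fo (cdom C f)) (Fo (ccod C f))) \<and>
     (\<forall>X \<in> obj C. Fa (cid C X) = cid D (Fo X)) \<and>
     (\<forall>f \<in> arr C. \<forall>g \<in> arr C. ccod C f = cdom C g \<longrightarrow> Fa (cmp C g f) = cmp D (Fa g) (Fa f))"

definition faithful ::
  "('o, 'a) cat \<Rightarrow> ('p, 'b) cat \<Rightarrow> ('o \<Rightarrow> 'p) \<Rightarrow> ('a \<Rightarrow> 'b) \<Rightarrow> bool" where
  "faithful C D Fo Fa \<longleftrightarrow>
     (\<forall>X Y. \<forall>f \<in> hom C X Y. \<forall>g \<in> hom C X Y. Fa f = Fa g \<longrightarrow> f = g)"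

definition preserves_finite_limits ::
  "('o, 'a) cat \<Rightarrow> ('p, 'b) cat \<Rightarrow> ('o \<Rightarrow> 'p) \<Rightarrow> ('a \<Rightarrow> 'b) \<Rightarrow> bool" where
  "preserves_finite_limits C D Fo Fa \<longleftrightarrow>
     (\<forall>T. is_terminal C T \<longrightarrow> is_terminal D (Fo T)) \<and>
     (\<forall>f g P p q. is_pullback C f g P p q \<longrightarrow>
        is_pullback D (Fa f) (Fa g) (Fo P) (Fa p) (Fa q))"

definition preserves_subobject_classifier ::
  "('o, 'a) cat \<Rightarrow> ('p, 'b) cat \<Rightarrow> ('o \<Rightarrow> 'p) \<Rightarrow> ('a \<Rightarrow> 'b) \<Rightarrow> bool" where
  "preserves_subobject_classifier C D Fo Fa \<longleftrightarrow>
     (\<forall>T Om t. is_subobject_classifier C T Om t \<longrightarrow>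
        is_subobject_classifier D (Fo T) (Fo Om) (Fa t))"

definition preserves_exponentials ::
  "('o, 'a) cat \<Rightarrow> ('p, 'b) cat \<Rightarrow> ('o \<Rightarrow> 'p) \<Rightarrow> ('a \<Rightarrow> 'b) \<Rightarrow> bool" where
  "preserves_exponentials C D Fo Fa \<longleftrightarrow>
     (\<forall>A B E P p1 p2 ev. is_exponential C A B E P p1 p2 ev \<longrightarrow>
        is_exponential D (Fo A) (Fo B) (Fo E) (Fo P) (Fa p1) (Fa p2) (Fa ev))"

definition preserves_nno ::
  "('o, 'a) cat \<Rightarrow> ('p, 'b) cat \<Rightarrow> ('o \<Rightarrow> 'p) \<Rightarrow> ('a \<Rightarrow> 'b) \<Rightarrow> bool" where
  "preserves_nno C D Fo Fa \<longleftrightarrow>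
     (\<forall>T N z s. is_nno C T N z s \<longrightarrow> is_nno D (Fo T) (Fo N) (Fa z) (Fa s))"

definition nat_trans ::
  "('o, 'a) cat \<Rightarrow> ('p, 'b) cat \<Rightarrow> ('o \<Rightarrow> 'p) \<Rightarrow> ('a \<Rightarrow> 'b) \<Rightarrow>
   ('o \<Rightarrow> 'p) \<Rightarrow> ('a \<Rightarrow> 'b) \<Rightarrow> ('o \<Rightarrow> 'b) \<Rightarrow> bool" where
  "nat_trans C D Fo Fa Go Ga \<eta> \<longleftrightarrow>
     (\<forall>X \<in> obj C. \<eta> X \<in> hom D (Fo X) (Go X)) \<and>
     (\<forall>f \<in> arr C. cmp D (\<eta> (ccod C f)) (Fa f) = cmp D (Ga f) (\<eta> (cdom C f)))"

definition duplicated_category_of_sets ::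
  "('o, 'a) cat \<Rightarrow> ('p, 'b) cat \<Rightarrow> ('o \<Rightarrow> 'p) \<Rightarrow> ('a \<Rightarrow> 'b) \<Rightarrow>
   ('o \<Rightarrow> 'p) \<Rightarrow> ('a \<Rightarrow> 'b) \<Rightarrow> ('o \<Rightarrow> 'b) \<Rightarrow> bool" where
  "duplicated_category_of_sets S S' \<sigma>o \<sigma>a \<tau>o \<tau>a \<iota> \<longleftrightarrow>
     ETCS S \<and> ETCS S' \<and>
     functor S S' \<sigma>o \<sigma>a \<and> preserves_finite_limits S S' \<sigma>o \<sigma>a \<and>
     preserves_subobject_classifier S S' \<sigma>o \<sigma>a \<and> preserves_exponentials S S' \<sigma>o \<sigma>a \<and>
     preserves_nno S S' \<sigma>o \<sigma>a \<and>
     functor S S' \<tau>o \<tau>a \<and> preserves_finite_limits S S' \<tau>o \<tau>a \<and>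
     nat_trans S S' \<sigma>o \<sigma>a \<tau>o \<tau>a \<iota> \<and>
     (\<forall>X. finite_obj S X \<longrightarrow> \<sigma>o X = \<tau>o X \<and> \<iota> X = cid S' (\<sigma>o X))"

end

theory Submission
  imports Defs
begin

text \<open>In a well-pointed category an arrow is determined by its points, so it suffices to
  show that \<sigma> and \<tau> are injective on points. For \<sigma> this uses that \<sigma> preserves exponentials
  and the natural numbers object: identifying two points would make the empty equalizer go to
  a terminal object, collapsing \<sigma>(N). For \<tau>, which is merely left exact, two points are
  separated by a characteristic map into the two-point, hence finite, object \<Omega>, on whose points
  \<tau> coincides with \<sigma>.\<close>

lemma hom_memD: "f \<in> hom C X Y \<Longrightarrow> f \<in> arr C \<and> cdom C f = X \<and> ccod C f = Y"
  by (simp add: hom_def)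

lemma cmp_in_hom: "category C \<Longrightarrow> f \<in> hom C X Y \<Longrightarrow> g \<in> hom C Y Z \<Longrightarrow> cmp C g f \<in> hom C X Z"
  unfolding category_def hom_def by auto

lemma cmp_assoc: "category C \<Longrightarrow> f \<in> hom C X Y \<Longrightarrow> g \<in> hom C Y Z \<Longrightarrow> h \<in> hom C Z W \<Longrightarrow>
   cmp C h (cmp C g f) = cmp C (cmp C h g) f"
  unfolding category_def hom_def by auto

lemma cid_in_hom: "category C \<Longrightarrow> X \<in> obj C \<Longrightarrow> cid C X \<in> hom C X X"
  unfolding category_def by auto

lemma cmp_cid_left: "category C \<Longrightarrow> f \<in> hom C X Y \<Longrightarrow> cmp C (cid C Y) f = f"
  unfolding category_def hom_def by auto

lemma cmp_cid_right: "category C \<Longrightarrow> f \<in> hom C X Y \<Longrightarrow> cmp C f (cid C X) = f"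
  unfolding category_def hom_def by auto

lemma hom_objs: "category C \<Longrightarrow> f \<in> hom C X Y \<Longrightarrow> X \<in> obj C \<and> Y \<in> obj C"
  unfolding category_def hom_def by auto

lemma terminal_obj: "is_terminal C T \<Longrightarrow> T \<in> obj C"
  unfolding is_terminal_def by blast

lemma terminal_arrow_exists: "is_terminal C T \<Longrightarrow> X \<in> obj C \<Longrightarrow> \<exists>f. f \<in> hom C X T"
  unfolding is_terminal_def by blast

lemma terminal_arrow_unique:
  assumes "category C" "is_terminal C T" "f \<in> hom C X T" "g \<in> hom C X T"
  shows "f = g"
  using assms hom_objs[OF assms(1,3)] unfolding is_terminal_def by metis

lemma terminal_endo_eq_cid: "category C \<Longrightarrow> is_terminal C T \<Longrightarrow> f \<in> hom C T T \<Longrightarrow> f = cid C T"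
  by (meson cid_in_hom terminal_obj terminal_arrow_unique)

lemma ETCSD:
  assumes "ETCS C"
  shows "category C" "has_finite_limits C" "cartesian_closed C" "well_pointed C"
    "\<exists>T N z s. is_nno C T N z s" "\<exists>T Om t. is_subobject_classifier C T Om t"
  using assms unfolding ETCS_def topos_def by auto

lemma functor_hom: "functor C D Fo Fa \<Longrightarrow> f \<in> hom C X Y \<Longrightarrow> Fa f \<in> hom D (Fo X) (Fo Y)"
  unfolding functor_def hom_def by auto

lemma functor_cmp: "functor C D Fo Fa \<Longrightarrow> f \<in> hom C X Y \<Longrightarrow> g \<in> hom C Y Z \<Longrightarrow>
   Fa (cmp C g f) = cmp D (Fa g) (Fa f)"
  unfolding functor_def hom_def by auto

subsection \<open>Points in a well-pointed category\<close>

lemma well_pointed_ext: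
  assumes "well_pointed C" "is_terminal C T" "f \<in> hom C X Y" "g \<in> hom C X Y"
    and "\<And>x. x \<in> hom C T X \<Longrightarrow> cmp C f x = cmp C g x"
  shows "f = g"
  using assms unfolding well_pointed_def by blast

lemma well_pointed_separating_point:
  assumes "well_pointed C" "is_terminal C T" "f \<in> hom C X Y" "g \<in> hom C X Y" "f \<noteq> g"
  obtains x where "x \<in> hom C T X" "cmp C f x \<noteq> cmp C g x"
  using well_pointed_ext[OF assms(1-4)] assms(5) by blast

lemma well_pointed_arrows_from_pointless_eq:
  assumes "well_pointed C" "is_terminal C T" "hom C T P = {}" "f \<in> hom C P Y" "g \<in> hom C P Y"
  shows "f = g"
  using well_pointed_ext[OF assms(1,2,4,5)] assms(3) by blast

lemma pointless_if_arrow_to_pointless: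
  assumes "category C" "g \<in> hom C Z P" "hom C T P = {}"
  shows "hom C T Z = {}"
  using cmp_in_hom[OF assms(1) _ assms(2)] assms(3) by blast

lemma functor_faithful_if_injective_on_points:
  assumes C: "category C" and W: "well_pointed C" and F: "functor C D Fo Fa"
    and T: "is_terminal C T"
    and inj: "\<And>Y a b. a \<in> hom C T Y \<Longrightarrow> b \<in> hom C T Y \<Longrightarrow> Fa a = Fa b \<Longrightarrow> a = b"
  shows "faithful C D Fo Fa"
  unfolding faithful_def
proof (intro allI ballI impI)
  fix X Y f g assume f: "f \<in> hom C X Y" and g: "g \<in> hom C X Y" and Ffg: "Fa f = Fa g"
  show "f = g"
  proof (rule well_pointed_ext[OF W T f g])
    fix x assume x: "x \<in> hom C T X"
    have "Fa (cmp C f x) = Fa (cmp C g x)"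
      using functor_cmp[OF F x f] functor_cmp[OF F x g] Ffg by simp
    then show "cmp C f x = cmp C g x"
      using inj cmp_in_hom[OF C x f] cmp_in_hom[OF C x g] by blast
  qed
qed

lemma pointless_if_cone_over_distinct_points:
  assumes C: "category C" and T: "is_terminal C T"
    and a: "a \<in> hom C T Y" and b: "b \<in> hom C T Y" and ab: "a \<noteq> b"
    and p: "p \<in> hom C Z T" and q: "q \<in> hom C Z T" and sq: "cmp C a p = cmp C b q"
  shows "hom C T Z = {}"
proof (rule ccontr)
  assume "hom C T Z \<noteq> {}"
  then obtain w where w: "w \<in> hom C T Z" by blast
  have pw: "cmp C p w = cid C T" and qw: "cmp C q w = cid C T"
    using terminal_endo_eq_cid[OF C T] cmp_in_hom[OF C w p] cmp_in_hom[OF C w q] by blast+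
  have "a = cmp C a (cmp C p w)" using pw cmp_cid_right[OF C a] by simp
  also have "\<dots> = cmp C (cmp C b q) w" using cmp_assoc[OF C w p a] sq by simp
  also have "\<dots> = b" using cmp_assoc[OF C w q b] qw cmp_cid_right[OF C b] by simp
  finally show False using ab by simp
qed

text \<open>Dedekind finiteness only needs that a monic endomorphism, being injective on the
  at most two points, squares to the identity.\<close>

lemma finite_obj_if_two_points:
  assumes C: "category C" and W: "well_pointed C" and T: "is_terminal C T"
    and x1: "x1 \<in> hom C T X" and x2: "x2 \<in> hom C T X"
    and pts: "\<And>x. x \<in> hom C T X \<Longrightarrow> x = x1 \<or> x = x2"
  shows "finite_obj C X"
proof -
  have Xo: "X \<in> obj C" using hom_objs[OF C x1] by simp
  have "iso C m" if m: "m \<in> hom C X X" and mono: "mono C m" for m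
  proof -
    have inj: "cmp C m x = cmp C m y \<Longrightarrow> x = y" if "x \<in> hom C T X" "y \<in> hom C T X" for x y
      using mono that hom_memD[OF m] unfolding mono_def hom_def by auto
    have "cmp C m (cmp C m x1) = x1 \<and> cmp C m (cmp C m x2) = x2"
      using pts[OF cmp_in_hom[OF C x1 m]] pts[OF cmp_in_hom[OF C x2 m]] inj[OF x1 x2]
      by (cases "x1 = x2") auto
    then have mmx: "cmp C m (cmp C m x) = x" if "x \<in> hom C T X" for x
      using pts[OF that] by auto
    have "cmp C m m = cid C X"
    proof (rule well_pointed_ext[OF W T cmp_in_hom[OF C m m] cid_in_hom[OF C Xo]])
      fix x assume x: "x \<in> hom C T X"
      show "cmp C (cmp C m m) x = cmp C (cid C X) x"
        using cmp_assoc[OF C x m m] mmx[OF x] cmp_cid_left[OF C x] by simp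
    qed
    then show ?thesis unfolding iso_def using m hom_memD[OF m] by auto
  qed
  then show ?thesis unfolding finite_obj_def using Xo by blast
qed

lemma terminal_finite_obj:
  assumes "category C" "well_pointed C" "is_terminal C T"
  shows "finite_obj C T"
  using finite_obj_if_two_points[OF assms cid_in_hom cid_in_hom] assms
    terminal_endo_eq_cid terminal_obj by metis

subsection \<open>Limits and exponentials\<close>

lemma pullback_of_point_along_itself_terminal:
  assumes C: "category C" and T: "is_terminal C T" and u: "u \<in> hom C T Y"
    and pb: "is_pullback C u u P p q"
  shows "is_terminal C P"
proof -
  have p: "p \<in> hom C P T" and q: "q \<in> hom C P T"
    using pb hom_memD[OF u] unfolding is_pullback_def by auto
  have U: "\<And>Z p' q'. p' \<in> hom C Z T \<Longrightarrow> q' \<in> hom C Z T \<Longrightarrow> cmp C u p' = cmp C u q' \<Longrightarrow>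
        (\<exists>!h. h \<in> hom C Z P \<and> cmp C p h = p' \<and> cmp C q h = q')"
    using pb hom_memD[OF u] unfolding is_pullback_def by simp
  have "\<exists>!h. h \<in> hom C Z P" if Z: "Z \<in> obj C" for Z
  proof -
    obtain t where t: "t \<in> hom C Z T" using terminal_arrow_exists[OF T Z] by blast
    then obtain h where h: "h \<in> hom C Z P" using U by blast
    moreover have "h' = h" if h': "h' \<in> hom C Z P" for h'
    proof -
      have ph: "cmp C p h \<in> hom C Z T" and qh: "cmp C q h \<in> hom C Z T"
        using cmp_in_hom[OF C h] p q by auto
      have "cmp C p h' = cmp C p h" "cmp C q h' = cmp C q h"
        using terminal_arrow_unique[OF C T] cmp_in_hom[OF C h'] p q ph qh by blast+
      moreover have "cmp C u (cmp C p h) = cmp C u (cmp C q h)"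
        using terminal_arrow_unique[OF C T ph qh] by simp
      ultimately show ?thesis using U[OF ph qh] h h' by blast
    qed
    ultimately show ?thesis by blast
  qed
  then show ?thesis unfolding is_terminal_def using hom_objs[OF C p] by blast
qed

lemma product_exists:
  assumes C: "category C" and L: "has_finite_limits C" and T: "is_terminal C T"
    and A: "A \<in> obj C" and B: "B \<in> obj C"
  obtains P p q where "is_product C A B P p q"
proof -
  obtain ta where ta: "ta \<in> hom C A T" using terminal_arrow_exists[OF T A] by blast
  obtain tb where tb: "tb \<in> hom C B T" using terminal_arrow_exists[OF T B] by blast
  obtain P p q where pb: "is_pullback C ta tb P p q"
    using L hom_memD[OF ta] hom_memD[OF tb] unfolding has_finite_limits_def by force
  have cone: "cmp C ta p' = cmp C tb q'" if "p' \<in> hom C Z A" "q' \<in> hom C Z B" for Z p' q'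
    using terminal_arrow_unique[OF C T cmp_in_hom[OF C _ ta] cmp_in_hom[OF C _ tb]] that by blast
  have "p \<in> hom C P A" "q \<in> hom C P B"
    and "\<And>Z p' q'. p' \<in> hom C Z A \<Longrightarrow> q' \<in> hom C Z B \<Longrightarrow> cmp C ta p' = cmp C tb q' \<Longrightarrow>
        (\<exists>!h. h \<in> hom C Z P \<and> cmp C p h = p' \<and> cmp C q h = q')"
    using pb hom_memD[OF ta] hom_memD[OF tb] unfolding is_pullback_def by auto
  then have "is_product C A B P p q"
    using A B cone unfolding is_product_def by blast
  then show thesis by (rule that)
qed

text \<open>If P has no points, then neither has Z \<times> P, so all arrows Z \<times> P \<rightarrow> N agree and
  the exponential transpose into N^P is unique; a point of N guarantees it exists.\<close>

lemma exponential_of_pointless_terminal: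
  assumes C: "category C" and W: "well_pointed C" and L: "has_finite_limits C"
    and T: "is_terminal C T" and P0: "hom C T P = {}" and z: "z \<in> hom C T N"
    and ex: "is_exponential C P N E Pr p1 p2 ev"
  shows "is_terminal C E"
proof -
  have prE: "is_product C E P Pr p1 p2" and ev: "ev \<in> hom C Pr N"
    using ex unfolding is_exponential_def by auto
  have Eo: "E \<in> obj C" and Po: "P \<in> obj C"
    using prE unfolding is_product_def by auto
  have "\<exists>!h. h \<in> hom C Z E" if Z: "Z \<in> obj C" for Z
  proof -
    obtain Q q1 q2 where pr: "is_product C Z P Q q1 q2"
      using product_exists[OF C L T Z Po] by blast
    have q1: "q1 \<in> hom C Q Z" and q2: "q2 \<in> hom C Q P" using pr unfolding is_product_def by auto
    have Q0: "hom C T Q = {}" using pointless_if_arrow_to_pointless[OF C q2 P0] .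
    obtain tQ where tQ: "tQ \<in> hom C Q T" using terminal_arrow_exists[OF T] hom_objs[OF C q1] by blast
    have g: "cmp C z tQ \<in> hom C Q N" using cmp_in_hom[OF C tQ z] .
    have transpose: "\<exists>k. k \<in> hom C Q Pr \<and> cmp C p1 k = cmp C h q1 \<and> cmp C p2 k = q2 \<and>
                cmp C ev k = cmp C z tQ" if h: "h \<in> hom C Z E" for h
    proof -
      obtain k where k: "k \<in> hom C Q Pr" "cmp C p1 k = cmp C h q1" "cmp C p2 k = q2"
        using prE cmp_in_hom[OF C q1 h] q2 unfolding is_product_def by blast
      moreover have "cmp C ev k = cmp C z tQ"
        using well_pointed_arrows_from_pointless_eq[OF W T Q0 cmp_in_hom[OF C k(1) ev] g] .
      ultimately show ?thesis by blast
    qed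
    have "\<exists>!h. h \<in> hom C Z E \<and>
           (\<exists>k. k \<in> hom C Q Pr \<and> cmp C p1 k = cmp C h q1 \<and> cmp C p2 k = q2 \<and>
                cmp C ev k = cmp C z tQ)"
      using ex pr g unfolding is_exponential_def by blast
    then show ?thesis using transpose by blast
  qed
  then show ?thesis using Eo unfolding is_terminal_def by blast
qed

text \<open>With A terminal, T \<cong> T \<times> A, so every point of B is ev applied to the transpose
  of that point; if B^A is terminal these transposes coincide.\<close>

lemma exponential_of_terminal_terminal_points_eq:
  assumes C: "category C" and T: "is_terminal C T" and A: "is_terminal C A"
    and E: "is_terminal C E" and ex: "is_exponential C A B E Pr p1 p2 ev"
    and g1: "g1 \<in> hom C T B" and g2: "g2 \<in> hom C T B"
  shows "g1 = g2"
proof -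
  have prE: "is_product C E A Pr p1 p2" using ex unfolding is_exponential_def by auto
  have To: "T \<in> obj C" using terminal_obj[OF T] .
  have Ao: "A \<in> obj C" using terminal_obj[OF A] .
  obtain q where q: "q \<in> hom C T A" using terminal_arrow_exists[OF A To] by blast
  have iT: "cid C T \<in> hom C T T" using cid_in_hom[OF C To] .
  have pr: "is_product C T A T (cid C T) q"
    unfolding is_product_def
  proof (intro conjI allI impI To Ao iT q)
    fix W p' q' assume "p' \<in> hom C W T \<and> q' \<in> hom C W A"
    then have p': "p' \<in> hom C W T" and q': "q' \<in> hom C W A" by auto
    show "\<exists>!h. h \<in> hom C W T \<and> cmp C (cid C T) h = p' \<and> cmp C q h = q'"
    proof (rule ex1I[of _ p'])
      show "p' \<in> hom C W T \<and> cmp C (cid C T) p' = p' \<and> cmp C q p' = q'"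
        using p' cmp_cid_left[OF C p'] terminal_arrow_unique[OF C A cmp_in_hom[OF C p' q] q'] by simp
      fix h assume "h \<in> hom C W T \<and> cmp C (cid C T) h = p' \<and> cmp C q h = q'"
      then show "h = p'" using cmp_cid_left[OF C] by force
    qed
  qed
  have "\<exists>!h. h \<in> hom C Z E \<and>
      (\<exists>k. k \<in> hom C Q Pr \<and> cmp C p1 k = cmp C h q1 \<and> cmp C p2 k = q2 \<and> cmp C ev k = g)"
    if "is_product C Z A Q q1 q2" "g \<in> hom C Q B" for Z Q q1 q2 g
    using ex that unfolding is_exponential_def by blast
  note UE = this[OF pr]
  obtain h1 k1 where h1: "h1 \<in> hom C T E" and k1: "k1 \<in> hom C T Pr"
      "cmp C p1 k1 = cmp C h1 (cid C T)" "cmp C p2 k1 = q" "cmp C ev k1 = g1"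
    using UE[OF g1] by blast
  obtain h2 k2 where h2: "h2 \<in> hom C T E" and k2: "k2 \<in> hom C T Pr"
      "cmp C p1 k2 = cmp C h2 (cid C T)" "cmp C p2 k2 = q" "cmp C ev k2 = g2"
    using UE[OF g2] by blast
  have UP: "\<And>p' q'. p' \<in> hom C T E \<Longrightarrow> q' \<in> hom C T A \<Longrightarrow>
      \<exists>!k. k \<in> hom C T Pr \<and> cmp C p1 k = p' \<and> cmp C p2 k = q'"
    using prE unfolding is_product_def by blast
  have "h1 = h2" using terminal_arrow_unique[OF C E h1 h2] .
  then have "k1 = k2" using UP[OF cmp_in_hom[OF C iT h1] q] k1 k2 by blast
  then show ?thesis using k1 k2 by simp
qed

text \<open>Primitive recursion sends 0 to one point and s to the constant map at another point,
  so 0 = s 0 would identify two distinct points, which exist by non-degeneracy.\<close>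

lemma nno_zero_neq_succ_zero:
  assumes C: "category C" and W: "well_pointed C" and nno: "is_nno C T N z s"
  shows "z \<noteq> cmp C s z"
proof
  assume eq: "z = cmp C s z"
  have T: "is_terminal C T" and z: "z \<in> hom C T N" and s: "s \<in> hom C N N"
    using nno unfolding is_nno_def by auto
  obtain X Y f g where f: "f \<in> hom C X Y" and g: "g \<in> hom C X Y" and fg: "f \<noteq> g"
    using W unfolding well_pointed_def by blast
  obtain x where x: "x \<in> hom C T X" and ne: "cmp C f x \<noteq> cmp C g x"
    using well_pointed_separating_point[OF W T f g fg] by blast
  define y1 where "y1 = cmp C f x"
  define y2 where "y2 = cmp C g x"
  have y1: "y1 \<in> hom C T Y" and y2: "y2 \<in> hom C T Y"
    unfolding y1_def y2_def using cmp_in_hom[OF C x] f g by auto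
  obtain t where t: "t \<in> hom C Y T" using terminal_arrow_exists[OF T] hom_objs[OF C f] by blast
  have u: "cmp C y2 t \<in> hom C Y Y" using cmp_in_hom[OF C t y2] .
  obtain h where h: "h \<in> hom C N Y" "cmp C h z = y1" "cmp C h s = cmp C (cmp C y2 t) h"
    using nno y1 u unfolding is_nno_def by blast
  have hz: "cmp C h z \<in> hom C T Y" using cmp_in_hom[OF C z h(1)] .
  have "y1 = cmp C (cmp C h s) z" using h(2) eq cmp_assoc[OF C z s h(1)] by simp
  also have "\<dots> = cmp C y2 (cmp C t (cmp C h z))"
    using h(3) cmp_assoc[OF C z h(1) u] cmp_assoc[OF C hz t y2] by simp
  also have "\<dots> = y2"
    using terminal_endo_eq_cid[OF C T cmp_in_hom[OF C hz t]] cmp_cid_right[OF C y2] by simp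
  finally show False using ne y1_def y2_def by simp
qed

subsection \<open>The subobject classifier\<close>

lemma point_mono:
  assumes C: "category C" and T: "is_terminal C T" and a: "a \<in> hom C T Y"
  shows "mono C a"
  unfolding mono_def
proof (intro conjI ballI impI)
  show "a \<in> arr C" using hom_memD[OF a] by simp
  fix f g assume "f \<in> arr C" "g \<in> arr C"
    and "ccod C f = cdom C a \<and> ccod C g = cdom C a \<and> cdom C f = cdom C g \<and> cmp C a f = cmp C a g"
  then have "f \<in> hom C (cdom C f) T" "g \<in> hom C (cdom C f) T"
    using hom_memD[OF a] by (auto simp: hom_def)
  then show "f = g" using terminal_arrow_unique[OF C T] by blast
qed

lemma mono_from_pointless:
  assumes C: "category C" and W: "well_pointed C" and T: "is_terminal C T"
    and U0: "hom C T U = {}" and m: "m \<in> hom C U Y"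
  shows "mono C m"
  unfolding mono_def
proof (intro conjI ballI impI)
  show "m \<in> arr C" using hom_memD[OF m] by simp
  fix f g assume "f \<in> arr C" "g \<in> arr C"
    and "ccod C f = cdom C m \<and> ccod C g = cdom C m \<and> cdom C f = cdom C g \<and> cmp C m f = cmp C m g"
  then have f: "f \<in> hom C (cdom C f) U" and g: "g \<in> hom C (cdom C f) U"
    using hom_memD[OF m] by (auto simp: hom_def)
  show "f = g"
    using well_pointed_arrows_from_pointless_eq[OF W T _ f g]
      pointless_if_arrow_to_pointless[OF C f U0] by blast
qed

lemma classifier_classifies:
  assumes "is_subobject_classifier C T Om t" "mono C m" "m \<in> hom C U X"
  shows "\<exists>!\<chi>. \<chi> \<in> hom C X Om \<and> (\<exists>u. is_pullback C \<chi> t U m u)"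
proof -
  have "\<exists>!\<chi>. \<chi> \<in> hom C (ccod C m) Om \<and> (\<exists>u. is_pullback C \<chi> t (cdom C m) m u)"
    using assms(1,2) unfolding is_subobject_classifier_def by blast
  then show ?thesis using hom_memD[OF assms(3)] by simp
qed

lemma classifier_separates_points:
  assumes C: "category C" and sc: "is_subobject_classifier C T Om t"
    and a: "a \<in> hom C T Y" and b: "b \<in> hom C T Y" and ab: "a \<noteq> b"
  obtains \<chi> where "\<chi> \<in> hom C Y Om" "cmp C \<chi> a = t" "cmp C \<chi> b \<noteq> t"
proof -
  have T: "is_terminal C T" and t: "t \<in> hom C T Om"
    using sc unfolding is_subobject_classifier_def by auto
  obtain \<chi> u where chi: "\<chi> \<in> hom C Y Om" and pb: "is_pullback C \<chi> t T a u"
    using classifier_classifies[OF sc point_mono[OF C T a] a] by blast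
  have u: "u \<in> hom C T T" and sq: "cmp C \<chi> a = cmp C t u"
    using pb hom_memD[OF t] unfolding is_pullback_def by auto
  have chi_a: "cmp C \<chi> a = t"
    using sq terminal_endo_eq_cid[OF C T u] cmp_cid_right[OF C t] by simp
  have iT: "cid C T \<in> hom C T T" using cid_in_hom[OF C terminal_obj[OF T]] .
  have "cmp C \<chi> b \<noteq> t"
  proof
    assume "cmp C \<chi> b = t"
    then have "cmp C \<chi> b = cmp C t (cid C T)" using cmp_cid_right[OF C t] by simp
    moreover have "\<And>Z p' q'. p' \<in> hom C Z Y \<Longrightarrow> q' \<in> hom C Z T \<Longrightarrow>
        cmp C \<chi> p' = cmp C t q' \<Longrightarrow> \<exists>h. h \<in> hom C Z T \<and> cmp C a h = p'"
      using pb hom_memD[OF chi] hom_memD[OF t] unfolding is_pullback_def by blast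
    ultimately obtain h where h: "h \<in> hom C T T" "cmp C a h = b" using b iT by blast
    then show False using terminal_endo_eq_cid[OF C T h(1)] cmp_cid_right[OF C a] ab by simp
  qed
  then show thesis using that chi chi_a by blast
qed

text \<open>A point c \<noteq> true classifies the pointless subobject U \<rightarrow> T; any other point
  d \<noteq> true has only pointless cones over (d, true), so it classifies U as well.\<close>

lemma classifier_points_eq_if_neq_true:
  assumes C: "category C" and W: "well_pointed C" and L: "has_finite_limits C"
    and sc: "is_subobject_classifier C T Om t"
    and c: "c \<in> hom C T Om" and d: "d \<in> hom C T Om" and ct: "c \<noteq> t" and dt: "d \<noteq> t"
  shows "c = d"
proof -
  have T: "is_terminal C T" and t: "t \<in> hom C T Om"
    using sc unfolding is_subobject_classifier_def by auto
  obtain U m v where pb: "is_pullback C c t U m v"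
    using L hom_memD[OF c] hom_memD[OF t] unfolding has_finite_limits_def by force
  have m: "m \<in> hom C U T" and v: "v \<in> hom C U T" and sq: "cmp C c m = cmp C t v"
    using pb hom_memD[OF c] hom_memD[OF t] unfolding is_pullback_def by auto
  have factor: "\<And>Z p' q'. p' \<in> hom C Z T \<Longrightarrow> q' \<in> hom C Z T \<Longrightarrow> cmp C c p' = cmp C t q' \<Longrightarrow>
      \<exists>!h. h \<in> hom C Z U \<and> cmp C m h = p' \<and> cmp C v h = q'"
    using pb hom_memD[OF c] hom_memD[OF t] unfolding is_pullback_def by simp
  have U0: "hom C T U = {}"
    using pointless_if_cone_over_distinct_points[OF C T c t ct m v sq] .
  have "is_pullback C d t U m v"
    unfolding is_pullback_def
  proof (intro conjI allI impI)
    show "d \<in> arr C" "t \<in> arr C" "ccod C d = ccod C t" "m \<in> hom C U (cdom C d)"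
      "v \<in> hom C U (cdom C t)"
      using hom_memD[OF d] hom_memD[OF t] m v by auto
    show "cmp C d m = cmp C t v"
      using well_pointed_arrows_from_pointless_eq[OF W T U0 cmp_in_hom[OF C m d] cmp_in_hom[OF C v t]] .
    fix Z p' q'
    assume cone: "p' \<in> hom C Z (cdom C d) \<and> q' \<in> hom C Z (cdom C t) \<and> cmp C d p' = cmp C t q'"
    then have p': "p' \<in> hom C Z T" and q': "q' \<in> hom C Z T"
      using hom_memD[OF d] hom_memD[OF t] by auto
    have "hom C T Z = {}"
      using pointless_if_cone_over_distinct_points[OF C T d t dt p' q'] cone by simp
    then have "cmp C c p' = cmp C t q'"
      using well_pointed_arrows_from_pointless_eq[OF W T _ cmp_in_hom[OF C p' c] cmp_in_hom[OF C q' t]]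
      by blast
    then show "\<exists>!h. h \<in> hom C Z U \<and> cmp C m h = p' \<and> cmp C v h = q'"
      by (rule factor[OF p' q'])
  qed
  with classifier_classifies[OF sc mono_from_pointless[OF C W T U0 m] m] show ?thesis using pb c d by blast
qed

lemma classifier_finite_obj:
  assumes C: "category C" and W: "well_pointed C" and L: "has_finite_limits C"
    and sc: "is_subobject_classifier C T Om t" and c: "c \<in> hom C T Om" and ct: "c \<noteq> t"
  shows "finite_obj C Om"
proof -
  have T: "is_terminal C T" and t: "t \<in> hom C T Om"
    using sc unfolding is_subobject_classifier_def by auto
  show ?thesis
    using finite_obj_if_two_points[OF C W T t c] classifier_points_eq_if_neq_true[OF C W L sc c _ ct]
    by blast
qed

text \<open>If \<sigma> identified distinct points a, b of Y, their equalizer P would be pointless while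
  \<sigma> P is terminal. Then N^P is terminal, hence so is \<sigma>(N^P) = \<sigma>(N)^\<sigma>(P); as \<sigma>(P) is
  terminal this collapses all points of \<sigma> N, contradicting 0 \<noteq> s 0.\<close>

lemma logical_functor_injective_on_points:
  assumes S: "ETCS S" and S': "ETCS S'" and F: "functor S S' Fo Fa"
    and L: "preserves_finite_limits S S' Fo Fa" and E: "preserves_exponentials S S' Fo Fa"
    and NN: "preserves_nno S S' Fo Fa"
    and T: "is_terminal S T" and a: "a \<in> hom S T Y" and b: "b \<in> hom S T Y"
    and Fab: "Fa a = Fa b"
  shows "a = b"
proof (rule ccontr)
  assume ab: "a \<noteq> b"
  have C: "category S" and W: "well_pointed S" and D: "category S'" and W': "well_pointed S'"
    using ETCSD S S' by blast+
  obtain P p q where pb: "is_pullback S a b P p q"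
    using ETCSD(2)[OF S] hom_memD[OF a] hom_memD[OF b] unfolding has_finite_limits_def by force
  have p: "p \<in> hom S P T" and q: "q \<in> hom S P T" and sq: "cmp S a p = cmp S b q"
    using pb hom_memD[OF a] hom_memD[OF b] unfolding is_pullback_def by auto
  have P0: "hom S T P = {}" using pointless_if_cone_over_distinct_points[OF C T a b ab p q sq] .
  have "is_pullback S' (Fa a) (Fa a) (Fo P) (Fa p) (Fa q)"
    using L pb Fab unfolding preserves_finite_limits_def by metis
  moreover have T': "is_terminal S' (Fo T)" using L T unfolding preserves_finite_limits_def by blast
  ultimately have FP: "is_terminal S' (Fo P)"
    using pullback_of_point_along_itself_terminal[OF D T' functor_hom[OF F a]] by blast
  obtain T0 N z s where nno: "is_nno S T0 N z s" using ETCSD(5)[OF S] by blast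
  have T0: "is_terminal S T0" and z: "z \<in> hom S T0 N" and s: "s \<in> hom S N N"
    using nno unfolding is_nno_def by auto
  obtain u where u: "u \<in> hom S T T0" using terminal_arrow_exists[OF T0 terminal_obj[OF T]] by blast
  obtain Ex Pr p1 p2 ev where ex: "is_exponential S P N Ex Pr p1 p2 ev"
    using ETCSD(3)[OF S] hom_objs[OF C p] hom_objs[OF C z] unfolding cartesian_closed_def by blast
  have "is_terminal S Ex"
    using exponential_of_pointless_terminal[OF C W ETCSD(2)[OF S] T P0 cmp_in_hom[OF C u z] ex] .
  then have FEx: "is_terminal S' (Fo Ex)" using L unfolding preserves_finite_limits_def by blast
  have ex': "is_exponential S' (Fo P) (Fo N) (Fo Ex) (Fo Pr) (Fa p1) (Fa p2) (Fa ev)"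
    using E ex unfolding preserves_exponentials_def by blast
  have nno': "is_nno S' (Fo T0) (Fo N) (Fa z) (Fa s)"
    using NN nno unfolding preserves_nno_def by blast
  have T0': "is_terminal S' (Fo T0)" using nno' unfolding is_nno_def by blast
  have "Fa z = cmp S' (Fa s) (Fa z)"
    using exponential_of_terminal_terminal_points_eq[OF D T0' FP FEx ex' functor_hom[OF F z]
        cmp_in_hom[OF D functor_hom[OF F z] functor_hom[OF F s]]] .
  then show False using nno_zero_neq_succ_zero[OF D W' nno'] by contradiction
qed

lemma duplicated_functors_agree_on_finite:
  assumes dup: "duplicated_category_of_sets S S' \<sigma>o \<sigma>a \<tau>o \<tau>a \<iota>"
    and X: "finite_obj S X" and Y: "finite_obj S Y" and e: "e \<in> hom S X Y"
  shows "\<sigma>a e = \<tau>a e"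
proof -
  have D: "category S'" and F: "functor S S' \<sigma>o \<sigma>a" and G: "functor S S' \<tau>o \<tau>a"
    and nt: "nat_trans S S' \<sigma>o \<sigma>a \<tau>o \<tau>a \<iota>"
    and fin: "\<And>X. finite_obj S X \<Longrightarrow> \<sigma>o X = \<tau>o X \<and> \<iota> X = cid S' (\<sigma>o X)"
    using dup ETCSD(1) unfolding duplicated_category_of_sets_def by auto
  have "cmp S' (\<iota> Y) (\<sigma>a e) = cmp S' (\<tau>a e) (\<iota> X)"
    using nt hom_memD[OF e] unfolding nat_trans_def by force
  then show ?thesis
    using fin[OF X] fin[OF Y] cmp_cid_left[OF D functor_hom[OF F e]]
      cmp_cid_right[OF D functor_hom[OF G e]] by simp
qed

lemma duplicated_tau_injective_on_points:
  assumes dup: "duplicated_category_of_sets S S' \<sigma>o \<sigma>a \<tau>o \<tau>a \<iota>"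
    and sc: "is_subobject_classifier S T Om t"
    and a: "a \<in> hom S T Y" and b: "b \<in> hom S T Y" and \<tau>ab: "\<tau>a a = \<tau>a b"
  shows "a = b"
proof (rule ccontr)
  assume ab: "a \<noteq> b"
  have S: "ETCS S" and S': "ETCS S'" and F: "functor S S' \<sigma>o \<sigma>a" and G: "functor S S' \<tau>o \<tau>a"
    and L: "preserves_finite_limits S S' \<sigma>o \<sigma>a" and E: "preserves_exponentials S S' \<sigma>o \<sigma>a"
    and NN: "preserves_nno S S' \<sigma>o \<sigma>a"
    using dup unfolding duplicated_category_of_sets_def by auto
  have T: "is_terminal S T" and t: "t \<in> hom S T Om"
    using sc unfolding is_subobject_classifier_def by auto
  note \<sigma>inj = logical_functor_injective_on_points[OF S S' F L E NN T]
  have C: "category S" and W: "well_pointed S" using ETCSD[OF S] by blast+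
  obtain \<chi> where chi: "\<chi> \<in> hom S Y Om" and \<chi>a: "cmp S \<chi> a = t" and \<chi>b: "cmp S \<chi> b \<noteq> t"
    using classifier_separates_points[OF C sc a b ab] by blast
  have c: "cmp S \<chi> b \<in> hom S T Om" using cmp_in_hom[OF C b chi] .
  have fin_Om: "finite_obj S Om"
    using classifier_finite_obj[OF C W ETCSD(2)[OF S] sc c \<chi>b] .
  have fin_T: "finite_obj S T" using terminal_finite_obj[OF C W T] .
  have "\<tau>a t = \<tau>a (cmp S \<chi> b)"
    using functor_cmp[OF G a chi] functor_cmp[OF G b chi] \<tau>ab \<chi>a by simp
  then have "\<sigma>a t = \<sigma>a (cmp S \<chi> b)"
    using duplicated_functors_agree_on_finite[OF dup fin_T fin_Om] t c by simp
  then show False using \<sigma>inj[OF t c] \<chi>b by simp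
qed

theorem mainTheorem1:
  fixes S :: "('o, 'a) cat" and S' :: "('p, 'b) cat"
    and \<sigma>o \<tau>o :: "'o \<Rightarrow> 'p" and \<sigma>a \<tau>a :: "'a \<Rightarrow> 'b" and \<iota> :: "'o \<Rightarrow> 'b"
  assumes "duplicated_category_of_sets S S' \<sigma>o \<sigma>a \<tau>o \<tau>a \<iota>"
  shows "faithful S S' \<sigma>o \<sigma>a \<and> faithful S S' \<tau>o \<tau>a"
proof -
  have S: "ETCS S" and S': "ETCS S'" and F: "functor S S' \<sigma>o \<sigma>a" and G: "functor S S' \<tau>o \<tau>a"
    and L: "preserves_finite_limits S S' \<sigma>o \<sigma>a" and E: "preserves_exponentials S S' \<sigma>o \<sigma>a"
    and NN: "preserves_nno S S' \<sigma>o \<sigma>a"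
    using assms unfolding duplicated_category_of_sets_def by auto
  obtain T Om t where sc: "is_subobject_classifier S T Om t" using ETCSD(6)[OF S] by blast
  then have T: "is_terminal S T" unfolding is_subobject_classifier_def by blast
  note reduce = functor_faithful_if_injective_on_points[OF ETCSD(1,4)[OF S] _ T]
  have "faithful S S' \<sigma>o \<sigma>a"
    using reduce[OF F] logical_functor_injective_on_points[OF S S' F L E NN T] by blast
  moreover have "faithful S S' \<tau>o \<tau>a"
    using reduce[OF G] duplicated_tau_injective_on_points[OF assms sc] by blast
  ultimately show ?thesis ..
qed

end
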